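(* Let $D$ be a finite digraph and let $\mathcal{S}=\{S_1,\dots,S_t\}$ be a greedy dicoloring of $D$. Then there exists a good path partition of $D$ with respect to $\mathcal{S}$.
   Context: A greedy dicoloring of $D$ is a partition $\mathcal{S}=\{S_1,\dots,S_t\}$ of $V(D)$ such that $S_1$ is a maximum-size vertex set inducing an acyclic subdigraph of $D$, and for each $i\in\{2,\dots,t\}$, $S_i$ is a maximum-size vertex set inducing an acyclic subdigraph of $D-\bigcup_{j=1}^{i-1}S_j$. A path partition of $D$ is a collection of vertex-disjoint directed paths covering $V(D)$. A good path partition with respect to $\mathcal{S}$ is a path partition $\mathcal{P}$ of $D$ such that for every path $(v_1,\dots,v_\ell)\in\mathcal{P}$ and every $i\in\{1,\dots,\ell\}$, $v_i\in S_i$. *)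

theory Defs
  imports Main
begin

text \<open>A finite digraph is given by a vertex set V and an arc relation A with
  A \<subseteq> V \<times> V and no loops.  Parallel arcs play no role.\<close>

definition digraph :: "'a set \<Rightarrow> ('a \<times> 'a) set \<Rightarrow> bool" where
  "digraph V A \<longleftrightarrow> A \<subseteq> V \<times> V \<and> (\<forall>v. (v, v) \<notin> A)"

definition induces_acyclic :: "('a \<times> 'a) set \<Rightarrow> 'a set \<Rightarrow> bool" where
  "induces_acyclic A S \<longleftrightarrow> acyclic (A \<inter> (S \<times> S))"

definition max_acyclic_set :: "'a set \<Rightarrow> ('a \<times> 'a) set \<Rightarrow> 'a set \<Rightarrow> bool" where
  "max_acyclic_set U A S \<longleftrightarrow> S \<subseteq> U \<and> induces_acyclic A S \<and>
     (\<forall>T. T \<subseteq> U \<and> induces_acyclic A T \<longrightarrow> card T \<le> card S)"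

text \<open>A greedy dicoloring, given as the list [S_1, ..., S_t] (0-indexed):
  a partition of V into nonempty parts, where S_i is a maximum acyclic set of
  D minus the union of the previous parts.\<close>
definition greedy_dicoloring :: "'a set \<Rightarrow> ('a \<times> 'a) set \<Rightarrow> 'a set list \<Rightarrow> bool" where
  "greedy_dicoloring V A Ss \<longleftrightarrow>
     (\<forall>i < length Ss. Ss ! i \<noteq> {}) \<and>
     (\<forall>i < length Ss. \<forall>j < length Ss. i \<noteq> j \<longrightarrow> Ss ! i \<inter> Ss ! j = {}) \<and>
     \<Union> (set Ss) = V \<and>
     (\<forall>i < length Ss. max_acyclic_set (V - \<Union> (set (take i Ss))) A (Ss ! i))"

definition dipath :: "'a set \<Rightarrow> ('a \<times> 'a) set \<Rightarrow> 'a list \<Rightarrow> bool" where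
  "dipath V A p \<longleftrightarrow> p \<noteq> [] \<and> distinct p \<and> set p \<subseteq> V \<and>
     (\<forall>i. Suc i < length p \<longrightarrow> (p ! i, p ! Suc i) \<in> A)"

definition path_partition :: "'a set \<Rightarrow> ('a \<times> 'a) set \<Rightarrow> 'a list set \<Rightarrow> bool" where
  "path_partition V A P \<longleftrightarrow>
     (\<forall>p \<in> P. dipath V A p) \<and>
     (\<forall>p \<in> P. \<forall>q \<in> P. p \<noteq> q \<longrightarrow> set p \<inter> set q = {}) \<and>
     (\<Union>p \<in> P. set p) = V"

text \<open>Good path partition w.r.t. Ss: the i-th vertex of every path lies in the
  i-th colour class (both 0-indexed here).\<close>
definition good_path_partition ::
  "'a set \<Rightarrow> ('a \<times> 'a) set \<Rightarrow> 'a set list \<Rightarrow> 'a list set \<Rightarrow> bool" where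
  "good_path_partition V A Ss P \<longleftrightarrow> path_partition V A P \<and>
     (\<forall>p \<in> P. length p \<le> length Ss \<and> (\<forall>i < length p. p ! i \<in> Ss ! i))"

end

theory Submission
  imports Defs
begin

text \<open>Consecutive colour classes \<open>S\<^sub>i\<close>, \<open>S\<^sub>i\<^sub>+\<^sub>1\<close> are joined by a matching that saturates
  \<open>S\<^sub>i\<^sub>+\<^sub>1\<close> and uses only arcs from \<open>S\<^sub>i\<close> to \<open>S\<^sub>i\<^sub>+\<^sub>1\<close>.  Otherwise, by Hall's theorem, some
  \<open>X \<subseteq> S\<^sub>i\<^sub>+\<^sub>1\<close> has a set \<open>N\<close> of in-neighbours in \<open>S\<^sub>i\<close> with \<open>|N| < |X|\<close>; since no arc
  goes from \<open>S\<^sub>i - N\<close> to \<open>X\<close>, the set \<open>(S\<^sub>i - N) \<union> X\<close> is acyclic, and it is larger than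
  \<open>S\<^sub>i\<close>, contradicting the greedy choice of \<open>S\<^sub>i\<close>.  A good path partition of
  \<open>S\<^sub>1 \<union> \<dots> \<union> S\<^sub>i\<close> is then extended to one of \<open>S\<^sub>1 \<union> \<dots> \<union> S\<^sub>i\<^sub>+\<^sub>1\<close> by appending each vertex
  of \<open>S\<^sub>i\<^sub>+\<^sub>1\<close> to the path ending at its partner: that partner lies in \<open>S\<^sub>i\<close>, so it is
  the last vertex of its path.\<close>

subsection \<open>Hall's marriage theorem\<close>

definition hall_condition :: "'i set \<Rightarrow> ('i \<Rightarrow> 'b set) \<Rightarrow> bool" where
  "hall_condition I N \<longleftrightarrow> (\<forall>X\<subseteq>I. card X \<le> card (\<Union>(N ` X)))"

lemma hall_condition_subset: "hall_condition I N \<Longrightarrow> J \<subseteq> I \<Longrightarrow> hall_condition J N"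
  by (auto simp: hall_condition_def)

lemma hall_condition_finite_UN:
  assumes "hall_condition I N" "X \<subseteq> I" "finite X"
  shows "finite (\<Union>(N ` X))"
proof (cases "X = {}")
  case False
  then have "0 < card X" using assms(3) by (simp add: card_gt_0_iff)
  also have "card X \<le> card (\<Union>(N ` X))" using assms(1,2) by (simp add: hall_condition_def)
  finally show ?thesis by (rule card_ge_0_finite)
qed simp

lemma hall_condition_remove_critical:
  assumes "finite I" and hall: "hall_condition I N"
    and X: "X \<subseteq> I" "card (\<Union>(N ` X)) = card X"
  shows "hall_condition (I - X) (\<lambda>x. N x - \<Union>(N ` X))"
  unfolding hall_condition_def
proof (intro allI impI)
  fix Y assume Y: "Y \<subseteq> I - X"
  have XY: "X \<union> Y \<subseteq> I" and "X \<inter> Y = {}" using X(1) Y by auto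
  have fin: "finite (X \<union> Y)" using XY \<open>finite I\<close> by (rule finite_subset)
  have finN: "finite (\<Union>(N ` (X \<union> Y)))" by (rule hall_condition_finite_UN[OF hall XY fin])
  have "card X + card Y = card (X \<union> Y)"
    using fin \<open>X \<inter> Y = {}\<close> by (simp add: card_Un_disjoint)
  also have "\<dots> \<le> card (\<Union>(N ` (X \<union> Y)))"
    using hall XY unfolding hall_condition_def by blast
  also have "\<Union>(N ` (X \<union> Y)) = \<Union>(N ` X) \<union> \<Union>((\<lambda>x. N x - \<Union>(N ` X)) ` Y)"
    by blast
  also have "card \<dots> = card X + card (\<Union>((\<lambda>x. N x - \<Union>(N ` X)) ` Y))"
    using finN X(2) by (subst card_Un_disjoint) (auto intro: finite_subset)
  finally show "card Y \<le> card (\<Union>((\<lambda>x. N x - \<Union>(N ` X)) ` Y))" by simp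
qed

lemma hall_condition_remove_surplus:
  assumes "finite I" and hall: "hall_condition I N"
    and surplus: "\<And>X. X \<subseteq> I \<Longrightarrow> X \<noteq> {} \<Longrightarrow> X \<noteq> I \<Longrightarrow> card X < card (\<Union>(N ` X))"
    and "x \<in> I"
  shows "hall_condition (I - {x}) (\<lambda>z. N z - {y})"
  unfolding hall_condition_def
proof (intro allI impI)
  fix Y assume Y: "Y \<subseteq> I - {x}"
  show "card Y \<le> card (\<Union>((\<lambda>z. N z - {y}) ` Y))"
  proof (cases "Y = {}")
    case False
    have "finite Y" using Y \<open>finite I\<close> by (blast intro: finite_subset)
    then have "finite (\<Union>(N ` Y))" using Y by (intro hall_condition_finite_UN[OF hall]) auto
    then have "card (\<Union>(N ` Y)) \<le> card (\<Union>(N ` Y) - {y}) + 1"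
      by (cases "y \<in> \<Union>(N ` Y)") (simp_all add: card_Suc_Diff1)
    moreover have "card Y < card (\<Union>(N ` Y))" using surplus Y False \<open>x \<in> I\<close> by blast
    moreover have "\<Union>((\<lambda>z. N z - {y}) ` Y) = \<Union>(N ` Y) - {y}" by blast
    ultimately show ?thesis by simp
  qed simp
qed

definition is_sdr :: "('i \<Rightarrow> 'b) \<Rightarrow> 'i set \<Rightarrow> ('i \<Rightarrow> 'b set) \<Rightarrow> bool" where
  "is_sdr f I N \<longleftrightarrow> inj_on f I \<and> (\<forall>x\<in>I. f x \<in> N x)"

lemma is_sdr_Un_critical:
  assumes f1: "is_sdr f1 X N" and f2: "is_sdr f2 (I - X) (\<lambda>x. N x - \<Union>(N ` X))"
    and "X \<subseteq> I"
  shows "is_sdr (\<lambda>x. if x \<in> X then f1 x else f2 x) I N"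
proof -
  let ?f = "\<lambda>x. if x \<in> X then f1 x else f2 x"
  have "inj_on ?f X" using f1 inj_on_cong[of X ?f f1] by (simp add: is_sdr_def)
  moreover have "inj_on ?f (I - X)" using f2 inj_on_cong[of "I - X" ?f f2] by (simp add: is_sdr_def)
  moreover have "?f ` X \<inter> ?f ` (I - X) = {}" using f1 f2 by (auto simp: is_sdr_def)
  moreover have "X - (I - X) = X" "(I - X) - X = I - X" by auto
  ultimately have "inj_on ?f (X \<union> (I - X))" unfolding inj_on_Un by metis
  also have "X \<union> (I - X) = I" using \<open>X \<subseteq> I\<close> by blast
  finally have "inj_on ?f I" .
  moreover have "\<forall>x\<in>I. ?f x \<in> N x" using f1 f2 unfolding is_sdr_def by auto
  ultimately show ?thesis unfolding is_sdr_def by blast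
qed

lemma is_sdr_insert:
  assumes f: "is_sdr f (I - {x}) (\<lambda>z. N z - {y})" and "y \<in> N x" "x \<in> I"
  shows "is_sdr (f(x := y)) I N"
proof -
  have "inj_on (f(x := y)) (insert x (I - {x}))" using f by (auto simp: is_sdr_def inj_on_def)
  also have "insert x (I - {x}) = I" using \<open>x \<in> I\<close> by blast
  finally have "inj_on (f(x := y)) I" .
  moreover have "\<forall>z\<in>I. (f(x := y)) z \<in> N z" using f \<open>y \<in> N x\<close> by (auto simp: is_sdr_def)
  ultimately show ?thesis unfolding is_sdr_def by blast
qed

theorem hall_marriage:
  assumes "finite I" and "hall_condition I N"
  shows "\<exists>f. is_sdr f I N"
  using assms
proof (induction "card I" arbitrary: I N rule: less_induct)
  case less
  show ?case
  proof (cases "\<exists>X. X \<subseteq> I \<and> X \<noteq> {} \<and> X \<noteq> I \<and> card (\<Union>(N ` X)) = card X")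
    case True
    then obtain X where X: "X \<subseteq> I" "X \<noteq> {}" "X \<noteq> I" "card (\<Union>(N ` X)) = card X"
      by blast
    have "finite X" using X(1) less.prems(1) by (rule finite_subset)
    have "card X < card I" using X(1,3) less.prems(1) by (simp add: psubset_card_mono)
    moreover have "card (I - X) < card I"
      using X(1,2) less.prems(1) by (intro psubset_card_mono) auto
    ultimately obtain f1 f2 where "is_sdr f1 X N" "is_sdr f2 (I - X) (\<lambda>x. N x - \<Union>(N ` X))"
      using less.hyps[OF _ \<open>finite X\<close> hall_condition_subset[OF less.prems(2) X(1)]]
        less.hyps[OF _ finite_Diff[OF less.prems(1)] hall_condition_remove_critical[OF less.prems X(1,4)]]
      by blast
    then have "is_sdr (\<lambda>x. if x \<in> X then f1 x else f2 x) I N"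
      by (rule is_sdr_Un_critical[OF _ _ X(1)])
    then show ?thesis by blast
  next
    case False
    note no_critical = this
    show ?thesis
    proof (cases "I = {}")
      case False
      then obtain x where x: "x \<in> I" by blast
      have "card {x} \<le> card (\<Union>(N ` {x}))"
        using less.prems(2) x unfolding hall_condition_def by blast
      then have "N x \<noteq> {}" by auto
      then obtain y where y: "y \<in> N x" by blast
      have surplus: "card X < card (\<Union>(N ` X))" if "X \<subseteq> I" "X \<noteq> {}" "X \<noteq> I" for X
      proof -
        have "card X \<le> card (\<Union>(N ` X))"
          using less.prems(2) that(1) unfolding hall_condition_def by blast
        moreover have "card (\<Union>(N ` X)) \<noteq> card X" using no_critical that by blast
        ultimately show ?thesis by linarith
      qed
      obtain f where "is_sdr f (I - {x}) (\<lambda>z. N z - {y})"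
        using less.hyps[OF _ _ hall_condition_remove_surplus[OF less.prems surplus x]]
          card_Diff1_less[OF less.prems(1) x] less.prems(1) by blast
      then have "is_sdr (f(x := y)) I N" using y x by (rule is_sdr_insert)
      then show ?thesis by blast
    qed (simp add: is_sdr_def)
  qed
qed

subsection \<open>Matchings between consecutive colour classes\<close>

lemma induces_acyclic_subset: "induces_acyclic A S \<Longrightarrow> T \<subseteq> S \<Longrightarrow> induces_acyclic A T"
  unfolding induces_acyclic_def by (erule acyclic_subset) blast

lemma induces_acyclic_Un:
  assumes P: "induces_acyclic A P" and Q: "induces_acyclic A Q"
    and "P \<inter> Q = {}" and no_arc: "A \<inter> (P \<times> Q) = {}"
  shows "induces_acyclic A (P \<union> Q)"
proof -
  let ?R = "A \<inter> ((P \<union> Q) \<times> (P \<union> Q))"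
  \<comment> \<open>a walk that has entered \<open>P\<close> never leaves it\<close>
  have walk: "(x \<in> P \<and> (x, y) \<in> (A \<inter> (P \<times> P))\<^sup>+) \<or> (x \<in> Q \<and> (x, y) \<in> (A \<inter> (Q \<times> Q))\<^sup>+)
      \<or> (x \<in> Q \<and> y \<in> P)"
    if "(x, y) \<in> ?R\<^sup>+" for x y
    using that
  proof (induction rule: trancl_induct)
    case (base y)
    then show ?case using no_arc by blast
  next
    case (step y z)
    then show ?case using no_arc by (blast intro: trancl_into_trancl dest: tranclD2)
  qed
  show ?thesis
    unfolding induces_acyclic_def
  proof (rule acyclicI, intro allI notI)
    fix x assume "(x, x) \<in> ?R\<^sup>+"
    from walk[OF this] show False
      using P Q \<open>P \<inter> Q = {}\<close> unfolding induces_acyclic_def acyclic_def by blast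
  qed
qed

lemma max_acyclic_set_card_le_in_neighbours:
  assumes "finite U" and S: "max_acyclic_set U A S"
    and X: "X \<subseteq> U" "X \<inter> S = {}" "induces_acyclic A X"
  shows "card X \<le> card {u \<in> S. \<exists>v\<in>X. (u, v) \<in> A}"
proof -
  define N where "N = {u \<in> S. \<exists>v\<in>X. (u, v) \<in> A}"
  have SU: "S \<subseteq> U" and "induces_acyclic A S"
    and S_max: "\<And>T. T \<subseteq> U \<Longrightarrow> induces_acyclic A T \<Longrightarrow> card T \<le> card S"
    using S unfolding max_acyclic_set_def by auto
  have "finite S" using SU \<open>finite U\<close> by (rule finite_subset)
  have "finite X" using X(1) \<open>finite U\<close> by (rule finite_subset)
  have "N \<subseteq> S" by (auto simp: N_def)
  have "induces_acyclic A ((S - N) \<union> X)"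
  proof (rule induces_acyclic_Un)
    show "induces_acyclic A (S - N)"
      using \<open>induces_acyclic A S\<close> by (rule induces_acyclic_subset) blast
    show "A \<inter> ((S - N) \<times> X) = {}" by (auto simp: N_def)
  qed (use X in auto)
  moreover have "(S - N) \<union> X \<subseteq> U" using SU X(1) by blast
  ultimately have "card ((S - N) \<union> X) \<le> card S" by (rule S_max[rotated])
  moreover have "card ((S - N) \<union> X) = card S - card N + card X"
    using \<open>finite S\<close> \<open>finite X\<close> \<open>N \<subseteq> S\<close> X(2)
    by (subst card_Un_disjoint) (auto simp: card_Diff_subset finite_subset)
  moreover have "card N \<le> card S" using \<open>finite S\<close> \<open>N \<subseteq> S\<close> by (rule card_mono)
  ultimately show ?thesis unfolding N_def by linarith
qed

definition arc_matching :: "('a \<times> 'a) set \<Rightarrow> 'a set \<Rightarrow> 'a set \<Rightarrow> ('a \<Rightarrow> 'a) \<Rightarrow> bool" where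
  "arc_matching A S T f \<longleftrightarrow> inj_on f T \<and> (\<forall>v\<in>T. f v \<in> S \<and> (f v, v) \<in> A)"

lemma greedy_dicoloring_arc_matching:
  assumes "finite V" and greedy: "greedy_dicoloring V A Ss" and i: "Suc i < length Ss"
  shows "\<exists>f. arc_matching A (Ss ! i) (Ss ! Suc i) f"
proof -
  define U where "U = V - \<Union>(set (take i Ss))"
  define N where "N v = {u \<in> Ss ! i. (u, v) \<in> A}" for v
  have S: "max_acyclic_set U A (Ss ! i)"
    using greedy i unfolding greedy_dicoloring_def U_def by auto
  have "max_acyclic_set (V - \<Union>(set (take (Suc i) Ss))) A (Ss ! Suc i)"
    using greedy i unfolding greedy_dicoloring_def by blast
  moreover have "set (take (Suc i) Ss) = insert (Ss ! i) (set (take i Ss))"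
    using i by (simp add: take_Suc_conv_app_nth)
  ultimately have T: "Ss ! Suc i \<subseteq> U" "Ss ! Suc i \<inter> Ss ! i = {}"
    "induces_acyclic A (Ss ! Suc i)"
    unfolding max_acyclic_set_def U_def by auto
  have "finite (Ss ! Suc i)" using T(1) \<open>finite V\<close> unfolding U_def by (blast intro: finite_subset)
  moreover have "hall_condition (Ss ! Suc i) N"
    unfolding hall_condition_def
  proof (intro allI impI)
    fix X assume "X \<subseteq> Ss ! Suc i"
    then have "card X \<le> card {u \<in> Ss ! i. \<exists>v\<in>X. (u, v) \<in> A}"
      using T \<open>finite V\<close> by (intro max_acyclic_set_card_le_in_neighbours[OF _ S])
        (auto simp: U_def intro: induces_acyclic_subset)
    also have "{u \<in> Ss ! i. \<exists>v\<in>X. (u, v) \<in> A} = \<Union>(N ` X)" by (auto simp: N_def)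
    finally show "card X \<le> card (\<Union>(N ` X))" .
  qed
  ultimately obtain f where "is_sdr f (Ss ! Suc i) N"
    using hall_marriage by blast
  then show ?thesis unfolding arc_matching_def is_sdr_def N_def by blast
qed

subsection \<open>Building the path partition class by class\<close>

lemma dipath_mono: "dipath V A p \<Longrightarrow> V \<subseteq> W \<Longrightarrow> dipath W A p"
  unfolding dipath_def by blast

lemma dipath_snoc:
  assumes p: "dipath V A p" and "v \<in> V" "v \<notin> set p" and arc: "(last p, v) \<in> A"
  shows "dipath V A (p @ [v])"
  unfolding dipath_def
proof (intro conjI allI impI)
  show "distinct (p @ [v])" "set (p @ [v]) \<subseteq> V"
    using p \<open>v \<in> V\<close> \<open>v \<notin> set p\<close> unfolding dipath_def by auto
  fix i assume i: "Suc i < length (p @ [v])"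
  show "((p @ [v]) ! i, (p @ [v]) ! Suc i) \<in> A"
  proof (cases "Suc i < length p")
    case True
    then show ?thesis using p unfolding dipath_def by (simp add: nth_append)
  next
    case False
    with i have "i = length p - 1" by simp
    then show ?thesis using arc p unfolding dipath_def by (simp add: nth_append last_conv_nth)
  qed
qed simp

definition extend_paths :: "'a list set \<Rightarrow> 'a set \<Rightarrow> ('a \<Rightarrow> 'a) \<Rightarrow> 'a list set" where
  "extend_paths P T f =
     {p \<in> P. last p \<notin> f ` T} \<union> {p @ [v] | p v. p \<in> P \<and> v \<in> T \<and> last p = f v}"

lemma extend_pathsE:
  assumes "q \<in> extend_paths P T f"
  obtains "q \<in> P" "last q \<notin> f ` T"
    | p v where "q = p @ [v]" "p \<in> P" "v \<in> T" "last p = f v"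
  using assms unfolding extend_paths_def by blast

context
  fixes V A P T and f :: "'a \<Rightarrow> 'a"
  assumes pp: "path_partition V A P" and disjoint: "V \<inter> T = {}"
    and ends: "\<forall>v\<in>T. (f v, v) \<in> A \<and> (\<exists>p\<in>P. last p = f v)"
begin

private lemma paths: "p \<in> P \<Longrightarrow> dipath V A p"
  and disj: "p \<in> P \<Longrightarrow> q \<in> P \<Longrightarrow> p \<noteq> q \<Longrightarrow> set p \<inter> set q = {}"
  and cover: "(\<Union>p\<in>P. set p) = V"
  using pp unfolding path_partition_def by auto

private lemma in_V: "p \<in> P \<Longrightarrow> set p \<subseteq> V"
  and last_in: "p \<in> P \<Longrightarrow> last p \<in> set p"
  using paths unfolding dipath_def by auto

lemma dipath_extend_paths:
  assumes "q \<in> extend_paths P T f"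
  shows "dipath (V \<union> T) A q"
  using assms
proof (cases rule: extend_pathsE)
  case 1
  then show ?thesis using paths by (blast intro: dipath_mono)
next
  case (2 p v)
  have "v \<notin> set p" using in_V[OF 2(2)] 2(3) disjoint by blast
  moreover have "dipath (V \<union> T) A p" using paths[OF 2(2)] by (rule dipath_mono) blast
  ultimately show ?thesis using 2 ends by (auto intro!: dipath_snoc)
qed

lemma extend_paths_common_vertex:
  assumes "inj_on f T" and q: "q \<in> extend_paths P T f" and q': "q' \<in> extend_paths P T f"
    and x: "x \<in> set q" "x \<in> set q'"
  shows "q = q'"
  using q
proof (cases rule: extend_pathsE)
  case 1
  from q' show ?thesis
  proof (cases rule: extend_pathsE)
    case (2 p' v')
    have "x \<in> set p'" using 1 2 x in_V disjoint by auto
    then show ?thesis using 1 2 x(1) disj by blast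
  qed (use 1 x disj in blast)
next
  case (2 p v)
  note q_ext = 2
  from q' show ?thesis
  proof (cases rule: extend_pathsE)
    case 1
    have "x \<in> set p" using 1 q_ext x in_V disjoint by auto
    then show ?thesis using 1 q_ext x(2) disj by blast
  next
    case (2 p' v')
    have "p = p'"
    proof (cases "x \<in> T")
      case True
      then have "x = v" "x = v'"
        using q_ext 2 x in_V[OF q_ext(2)] in_V[OF 2(2)] disjoint by auto
      then have "last p \<in> set p \<inter> set p'"
        using q_ext(4) 2(4) last_in[OF q_ext(2)] last_in[OF 2(2)] by simp
      then show ?thesis using disj[OF q_ext(2) 2(2)] by blast
    next
      case False
      then have "x \<in> set p" "x \<in> set p'" using q_ext 2 x by auto
      then show ?thesis using disj[OF q_ext(2) 2(2)] by blast
    qed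
    then have "v = v'" using q_ext(3,4) 2(3,4) \<open>inj_on f T\<close> by (auto dest: inj_onD)
    then show ?thesis using \<open>p = p'\<close> q_ext(1) 2(1) by simp
  qed
qed

lemma extend_paths_cover: "(\<Union>q\<in>extend_paths P T f. set q) = V \<union> T"
proof
  show "(\<Union>q\<in>extend_paths P T f. set q) \<subseteq> V \<union> T"
    using dipath_extend_paths unfolding dipath_def by blast
  show "V \<union> T \<subseteq> (\<Union>q\<in>extend_paths P T f. set q)"
  proof
    fix x assume "x \<in> V \<union> T"
    then show "x \<in> (\<Union>q\<in>extend_paths P T f. set q)"
    proof
      assume "x \<in> V"
      then obtain p where "p \<in> P" "x \<in> set p" using cover by blast
      show ?thesis
      proof (cases "last p \<in> f ` T")
        case True
        then obtain v where "v \<in> T" "last p = f v" by blast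
        then have "p @ [v] \<in> extend_paths P T f"
          using \<open>p \<in> P\<close> unfolding extend_paths_def by blast
        then show ?thesis using \<open>x \<in> set p\<close> by (intro UN_I[of "p @ [v]"]) auto
      next
        case False
        then show ?thesis using \<open>p \<in> P\<close> \<open>x \<in> set p\<close> unfolding extend_paths_def by blast
      qed
    next
      assume "x \<in> T"
      then obtain p where "p \<in> P" "last p = f x" using ends by blast
      then have "p @ [x] \<in> extend_paths P T f"
        using \<open>x \<in> T\<close> unfolding extend_paths_def by blast
      then show ?thesis by (intro UN_I[of "p @ [x]"]) auto
    qed
  qed
qed

lemma path_partition_extend_paths:
  assumes "inj_on f T"
  shows "path_partition (V \<union> T) A (extend_paths P T f)"
  unfolding path_partition_def
  using dipath_extend_paths extend_paths_cover extend_paths_common_vertex[OF assms]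
  by blast

end

lemma good_path_partition_last_class:
  assumes good: "good_path_partition V A Ss P"
    and disjoint: "\<forall>i<length Ss. \<forall>j<length Ss. i \<noteq> j \<longrightarrow> Ss ! i \<inter> Ss ! j = {}"
    and "Ss \<noteq> []" "p \<in> P" "x \<in> set p" "x \<in> last Ss"
  shows "length p = length Ss \<and> last p = x"
proof -
  obtain j where j: "j < length p" "p ! j = x" using \<open>x \<in> set p\<close> by (auto simp: in_set_conv_nth)
  have len: "length p \<le> length Ss" and "p ! j \<in> Ss ! j"
    using good \<open>p \<in> P\<close> j(1) unfolding good_path_partition_def by auto
  moreover have "x \<in> Ss ! (length Ss - 1)" using \<open>x \<in> last Ss\<close> \<open>Ss \<noteq> []\<close> by (simp add: last_conv_nth)
  moreover have "j < length Ss" "length Ss - 1 < length Ss" using j(1) len \<open>Ss \<noteq> []\<close> by auto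
  ultimately have "j = length Ss - 1" using disjoint j(2) by blast
  then have "length p = length Ss" using j(1) len by linarith
  moreover have "p \<noteq> []" using j(1) by auto
  ultimately show ?thesis using j \<open>j = length Ss - 1\<close> by (simp add: last_conv_nth)
qed

lemma good_path_partition_snoc:
  assumes good: "good_path_partition (\<Union>(set Ss)) A Ss P"
    and disjoint: "\<forall>i<length Ss. \<forall>j<length Ss. i \<noteq> j \<longrightarrow> Ss ! i \<inter> Ss ! j = {}"
    and "Ss \<noteq> []" and "\<Union>(set Ss) \<inter> T = {}" and match: "arc_matching A (last Ss) T f"
  shows "good_path_partition (\<Union>(set (Ss @ [T]))) A (Ss @ [T]) (extend_paths P T f)"
proof -
  have pp: "path_partition (\<Union>(set Ss)) A P"
    and lengths: "\<forall>p\<in>P. length p \<le> length Ss \<and> (\<forall>i<length p. p ! i \<in> Ss ! i)"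
    using good unfolding good_path_partition_def by auto
  have last_class: "length p = length Ss \<and> last p = x"
    if "p \<in> P" "x \<in> set p" "x \<in> last Ss" for p x
    using good_path_partition_last_class[OF good disjoint \<open>Ss \<noteq> []\<close> that] .
  have ends: "\<forall>v\<in>T. (f v, v) \<in> A \<and> (\<exists>p\<in>P. last p = f v)"
  proof
    fix v assume "v \<in> T"
    then have "f v \<in> last Ss" "(f v, v) \<in> A" using match unfolding arc_matching_def by auto
    moreover have "f v \<in> (\<Union>p\<in>P. set p)"
      using \<open>f v \<in> last Ss\<close> \<open>Ss \<noteq> []\<close> pp unfolding path_partition_def by auto
    then obtain p where "p \<in> P" "f v \<in> set p" by blast
    ultimately show "(f v, v) \<in> A \<and> (\<exists>p\<in>P. last p = f v)" using last_class by blast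
  qed
  have "path_partition (\<Union>(set Ss) \<union> T) A (extend_paths P T f)"
    using path_partition_extend_paths[OF pp \<open>\<Union>(set Ss) \<inter> T = {}\<close> ends] match
    unfolding arc_matching_def by blast
  moreover have "length q \<le> length (Ss @ [T]) \<and> (\<forall>i<length q. q ! i \<in> (Ss @ [T]) ! i)"
    if "q \<in> extend_paths P T f" for q
    using that
  proof (cases rule: extend_pathsE)
    case 1
    then show ?thesis using lengths by (auto simp: nth_append)
  next
    case (2 p v)
    have "p \<noteq> []" using pp 2(2) unfolding path_partition_def dipath_def by auto
    moreover have "last p \<in> last Ss" using 2 match unfolding arc_matching_def by auto
    ultimately have "length p = length Ss" by (metis last_class[OF 2(2)] last_in_set)
    then show ?thesis using 2 lengths by (auto simp: nth_append less_Suc_eq)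
  qed
  moreover have "\<Union>(set (Ss @ [T])) = \<Union>(set Ss) \<union> T" by auto
  ultimately show ?thesis unfolding good_path_partition_def by simp
qed

lemma good_path_partition_singletons: "good_path_partition S A [S] ((\<lambda>v. [v]) ` S)"
  by (auto simp: good_path_partition_def path_partition_def dipath_def)

lemma disjoint_nth_snocD:
  assumes "\<forall>i<length (Ss @ [T]). \<forall>j<length (Ss @ [T]).
    i \<noteq> j \<longrightarrow> (Ss @ [T]) ! i \<inter> (Ss @ [T]) ! j = {}"
  shows "\<forall>i<length Ss. \<forall>j<length Ss. i \<noteq> j \<longrightarrow> Ss ! i \<inter> Ss ! j = {}"
    and "\<Union>(set Ss) \<inter> T = {}"
proof -
  show "\<forall>i<length Ss. \<forall>j<length Ss. i \<noteq> j \<longrightarrow> Ss ! i \<inter> Ss ! j = {}"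
  proof (intro allI impI)
    fix i j assume "i < length Ss" "j < length Ss" "i \<noteq> j"
    then show "Ss ! i \<inter> Ss ! j = {}"
      using assms[rule_format, of i j] by (simp add: nth_append)
  qed
  show "\<Union>(set Ss) \<inter> T = {}"
  proof (rule ccontr)
    assume "\<Union>(set Ss) \<inter> T \<noteq> {}"
    then obtain i x where i: "i < length Ss" "x \<in> Ss ! i" "x \<in> T"
      by (auto simp: in_set_conv_nth)
    then show False using assms[rule_format, of i "length Ss"] by (auto simp: nth_append)
  qed
qed

lemma good_path_partition_of_arc_matchings:
  assumes "\<forall>i<length Ss. \<forall>j<length Ss. i \<noteq> j \<longrightarrow> Ss ! i \<inter> Ss ! j = {}"
    and "\<forall>i. Suc i < length Ss \<longrightarrow> (\<exists>f. arc_matching A (Ss ! i) (Ss ! Suc i) f)"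
  shows "\<exists>P. good_path_partition (\<Union>(set Ss)) A Ss P"
  using assms
proof (induction Ss rule: rev_induct)
  case Nil
  have "good_path_partition {} A [] {}"
    by (simp add: good_path_partition_def path_partition_def)
  then show ?case by auto
next
  case (snoc T Ss)
  show ?case
  proof (cases "Ss = []")
    case True
    then show ?thesis using good_path_partition_singletons by fastforce
  next
    case False
    note disjoint = disjoint_nth_snocD[OF snoc.prems(1)]
    moreover have "\<forall>i. Suc i < length Ss \<longrightarrow> (\<exists>f. arc_matching A (Ss ! i) (Ss ! Suc i) f)"
    proof (intro allI impI)
      fix i assume "Suc i < length Ss"
      then show "\<exists>f. arc_matching A (Ss ! i) (Ss ! Suc i) f"
        using snoc.prems(2)[rule_format, of i] by (simp add: nth_append)
    qed
    ultimately obtain P where P: "good_path_partition (\<Union>(set Ss)) A Ss P"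
      using snoc.IH by blast
    obtain f where "arc_matching A (last Ss) T f"
    proof -
      have "Suc (length Ss - 1) < length (Ss @ [T])" using \<open>Ss \<noteq> []\<close> by simp
      then obtain f
        where "arc_matching A ((Ss @ [T]) ! (length Ss - 1)) ((Ss @ [T]) ! Suc (length Ss - 1)) f"
        using snoc.prems(2) by blast
      then show thesis using that \<open>Ss \<noteq> []\<close> by (simp add: nth_append last_conv_nth)
    qed
    then show ?thesis using good_path_partition_snoc[OF P disjoint(1) \<open>Ss \<noteq> []\<close> disjoint(2)] by blast
  qed
qed

theorem mainTheorem5:
  fixes V :: "'a set" and A :: "('a \<times> 'a) set" and Ss :: "'a set list"
  assumes "finite V" and "digraph V A" and "greedy_dicoloring V A Ss"
  shows "\<exists>P. good_path_partition V A Ss P"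
proof -
  have "\<Union>(set Ss) = V"
    and "\<forall>i<length Ss. \<forall>j<length Ss. i \<noteq> j \<longrightarrow> Ss ! i \<inter> Ss ! j = {}"
    using assms(3) unfolding greedy_dicoloring_def by auto
  moreover have "\<forall>i. Suc i < length Ss \<longrightarrow> (\<exists>f. arc_matching A (Ss ! i) (Ss ! Suc i) f)"
    using greedy_dicoloring_arc_matching[OF assms(1,3)] by blast
  ultimately show ?thesis using good_path_partition_of_arc_matchings by metis
qed

end
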